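(* Let $m_1\ge 1$ and let $(\alpha_i)_{i\in\mathbb{Z}}$ be positive reals with $\alpha_{i+m_1}=\alpha_i$ for all $i$. Let $N$ be a positive multiple of $m_1$ and index positions in a row by $i\in\mathbb{Z}/N\mathbb{Z}$. Let $\beta,\beta'>0$ and suppose that either (small $r$ case) $\alpha_i\beta<1$ and $\alpha_i\beta'<1$ for all $i$, or (large $r$ case) $\alpha_i\beta>1$ and $\alpha_i\beta'>1$ for all $i$; put $\epsilon=+1$ in the small $r$ case and $\epsilon=-1$ in the large $r$ case. For $b\in\{\beta,\beta'\}$ define the $2^N\times 2^N$ matrix $T_b$, indexed by $x,z\in\{0,1\}^{\mathbb{Z}/N\mathbb{Z}}$, by $$T_b(x,z)=\sum_{e}\prod_{i\in\mathbb{Z}/N\mathbb{Z}}\mathrm{wt}_i(x,z,e),$$ where the sum is over all $e\in\{0,1\}^{\mathbb{Z}/N\mathbb{Z}}$ satisfying $x_i+e_i=z_i+e_{i-1}\le 1$ for every $i$, and where $\mathrm{wt}_i=\epsilon(1-\alpha_i^2b^2)$ if $x_i=e_i=z_i=e_{i-1}=0$; $\mathrm{wt}_i=\alpha_i b$ if $x_i=e_{i-1}=1$ or if $e_i=z_i=1$; and $\mathrm{wt}_i=1$ otherwise (i.e. if $x_i=z_i=1$ or $e_i=e_{i-1}=1$). Then $T_\beta T_{\beta'}=T_{\beta'}T_\beta$.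
   Context: This is the (vertical) transfer matrix of one row of the five-vertex model on a cylinder of circumference $N$: $x_i$ (resp. $z_i$) indicates whether the vertical edge below (resp. above) vertex $i$ is occupied, and $e_i$ indicates whether the horizontal edge between vertex $i$ and vertex $i+1$ is occupied. Paths move north or west and are vertex-disjoint. The five allowed local configurations at a vertex are: empty, vertical straight-through, horizontal straight-through, and two corners (entering from the south and leaving to the west, or entering from the east and leaving to the north). The vertex parameter at position $i$ in a row with parameter $b$ is $r=\alpha_i b$; empty vertices have weight $|1-r^2|$, corners have weight $r$, and straight-through vertices have weight $1$. *)

theory Defs
  imports Complex_Main
begin

text \<open>Positions of a row are 0..N-1, standing for Z/NZ. A 0/1 configuration on the
row is represented by the set of occupied positions (a subset of {0..<N}).\<close>

definition ofb :: "bool \<Rightarrow> nat" where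
  "ofb p = (if p then 1 else 0)"

definition prevpos :: "nat \<Rightarrow> nat \<Rightarrow> nat" where
  "prevpos N i = (i + N - 1) mod N"

definition admissible :: "nat \<Rightarrow> nat set \<Rightarrow> nat set \<Rightarrow> nat set \<Rightarrow> bool" where
  "admissible N x z e \<longleftrightarrow>
     (\<forall>i<N. ofb (i \<in> x) + ofb (i \<in> e) = ofb (i \<in> z) + ofb (prevpos N i \<in> e)
           \<and> ofb (i \<in> x) + ofb (i \<in> e) \<le> 1)"

definition wt :: "real \<Rightarrow> real \<Rightarrow> nat \<Rightarrow> nat set \<Rightarrow> nat set \<Rightarrow> nat set \<Rightarrow> nat \<Rightarrow> real" where
  "wt eps r N x z e i =
     (if i \<notin> x \<and> i \<notin> e \<and> i \<notin> z \<and> prevpos N i \<notin> e then eps * (1 - r\<^sup>2)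
      else if (i \<in> x \<and> prevpos N i \<in> e) \<or> (i \<in> e \<and> i \<in> z) then r
      else 1)"

definition Tmat :: "(int \<Rightarrow> real) \<Rightarrow> real \<Rightarrow> nat \<Rightarrow> real \<Rightarrow> nat set \<Rightarrow> nat set \<Rightarrow> real" where
  "Tmat alpha eps N b x z =
     (\<Sum>e\<in>{e. e \<subseteq> {0..<N} \<and> admissible N x z e}.
        \<Prod>i<N. wt eps (alpha (int i) * b) N x z e i)"

definition matmul :: "nat \<Rightarrow> (nat set \<Rightarrow> nat set \<Rightarrow> real) \<Rightarrow> (nat set \<Rightarrow> nat set \<Rightarrow> real)
     \<Rightarrow> nat set \<Rightarrow> nat set \<Rightarrow> real" where
  "matmul N A B x z = (\<Sum>y\<in>Pow {0..<N}. A x y * B y z)"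

end

theory Submission
  imports Defs "HOL-Analysis.Determinants"
begin

text \<open>Summing out the middle row, an entry of \<open>T\<^sub>\<beta> T\<^sub>\<beta>\<^sub>'\<close> becomes a sum, over the
  horizontal edges \<open>(e\<^sub>i, f\<^sub>i)\<close> of both rows, of a cyclic product of \<open>4 \<times> 4\<close> column matrices
  \<open>L\<^sub>i(\<beta>, \<beta>')\<close>: the trace of their ordered product. An invertible R-matrix depending only on
  \<open>\<beta> / \<beta>'\<close> satisfies \<open>R L\<^sub>i(\<beta>, \<beta>') = L\<^sub>i(\<beta>', \<beta>) R\<close> at every position, so the two traces
  agree.\<close>

lemma sum_PiE_insert:
  assumes "x \<notin> S"
  shows "(\<Sum>\<sigma>\<in>Pi\<^sub>E (insert x S) T. F \<sigma>) = (\<Sum>c\<in>T x. \<Sum>\<sigma>\<in>Pi\<^sub>E S T. F (\<sigma>(x := c)))"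
proof -
  have "(\<Sum>\<sigma>\<in>Pi\<^sub>E (insert x S) T. F \<sigma>) = (\<Sum>(c, \<sigma>)\<in>T x \<times> Pi\<^sub>E S T. F (\<sigma>(x := c)))"
    using assms
    by (intro sum.reindex_bij_witness[of _ "\<lambda>(c, \<sigma>). \<sigma>(x := c)" "\<lambda>\<sigma>. (\<sigma> x, \<sigma>(x := undefined))"])
       (auto simp: PiE_def extensional_def)
  then show ?thesis by (simp add: sum.cartesian_product)
qed

lemma sum_Pow_prod_mem:
  fixes h :: "'a \<Rightarrow> bool \<Rightarrow> 'b::comm_semiring_1"
  assumes "finite A"
  shows "(\<Sum>y\<in>Pow A. \<Prod>i\<in>A. h i (i \<in> y)) = (\<Prod>i\<in>A. h i True + h i False)"
proof -
  have "(\<Prod>i\<in>A. h i (i \<in> y)) = (\<Prod>i\<in>y. h i True) * (\<Prod>i\<in>A - y. h i False)" if "y \<subseteq> A" for y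
  proof -
    have "(\<Prod>i\<in>A. h i (i \<in> y)) = (\<Prod>i\<in>A - y. h i (i \<in> y)) * (\<Prod>i\<in>y. h i (i \<in> y))"
      by (rule prod.subset_diff[OF that assms])
    also have "\<dots> = (\<Prod>i\<in>A - y. h i False) * (\<Prod>i\<in>y. h i True)"
      by (intro arg_cong2[where f = "(*)"] prod.cong) auto
    finally show ?thesis by (simp only: mult.commute)
  qed
  then show ?thesis by (simp add: prod_add[OF assms])
qed

lemma sum_Pow_pair_eq_sum_PiE:
  "(\<Sum>e\<in>Pow A. \<Sum>f\<in>Pow A. F (restrict (\<lambda>i. (i \<in> e, i \<in> f)) A)) = (\<Sum>\<sigma>\<in>A \<rightarrow>\<^sub>E UNIV. F \<sigma>)"
  unfolding sum.cartesian_product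
  by (rule sum.reindex_bij_witness[of _ "\<lambda>\<sigma>. ({i\<in>A. fst (\<sigma> i)}, {i\<in>A. snd (\<sigma> i)})"
        "\<lambda>(e, f). restrict (\<lambda>i. (i \<in> e, i \<in> f)) A"])
     (auto simp: PiE_def extensional_def)

fun mat_chain :: "(nat \<Rightarrow> 'a::semiring_1^'n^'n) \<Rightarrow> nat \<Rightarrow> 'a^'n^'n" where
  "mat_chain G 0 = mat 1"
| "mat_chain G (Suc n) = G n ** mat_chain G n"

lemma mat_chain_intertwine:
  assumes "\<And>i. i < n \<Longrightarrow> R ** G i = H i ** R"
  shows "R ** mat_chain G n = mat_chain H n ** R"
  using assms
proof (induction n)
  case (Suc n)
  have "R ** mat_chain G (Suc n) = H n ** (R ** mat_chain G n)"
    using Suc.prems by (simp add: matrix_mul_assoc)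
  also have "\<dots> = mat_chain H (Suc n) ** R"
    using Suc by (simp add: matrix_mul_assoc)
  finally show ?case .
qed simp

lemma trace_mat_chain_intertwine:
  fixes R :: "'a::comm_semiring_1^'n^'n"
  assumes "invertible R" and "\<And>i. i < n \<Longrightarrow> R ** G i = H i ** R"
  shows "trace (mat_chain G n) = trace (mat_chain H n)"
proof -
  obtain S where RS: "R ** S = mat 1" and SR: "S ** R = mat 1"
    using assms(1) by (auto simp: invertible_def)
  have "trace (mat_chain H n) = trace ((mat_chain H n ** R) ** S)"
    by (simp add: RS flip: matrix_mul_assoc)
  also have "\<dots> = trace (S ** (R ** mat_chain G n))"
    by (simp only: mat_chain_intertwine[OF assms(2)] trace_mul_sym[of _ S])
  also have "\<dots> = trace (mat_chain G n)"
    by (simp add: SR matrix_mul_assoc)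
  finally show ?thesis by simp
qed

text \<open>Paths from \<open>b\<close> to \<open>a\<close>: \<open>\<sigma> i\<close> is the state between \<open>G i\<close> and \<open>G (i + 1)\<close>, and the
  final state \<open>\<sigma> n\<close> is forced to be \<open>a\<close>.\<close>

lemma mat_chain_Suc_entry:
  "mat_chain G (Suc n) $ a $ b
     = (\<Sum>\<sigma>\<in>{..<n} \<rightarrow>\<^sub>E UNIV. \<Prod>i\<le>n. G i $ (\<sigma>(n := a)) i $ (if i = 0 then b else \<sigma> (i - 1)))"
proof (induction n arbitrary: a)
  case 0
  show ?case by simp
next
  case (Suc n)
  have last_factor: "(\<Prod>i\<le>Suc n. G i $ (\<sigma>(n := c, Suc n := a)) i $ (if i = 0 then b else (\<sigma>(n := c)) (i - 1)))
      = G (Suc n) $ a $ c * (\<Prod>i\<le>n. G i $ (\<sigma>(n := c)) i $ (if i = 0 then b else \<sigma> (i - 1)))"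
    for \<sigma> c
  proof -
    have "(\<Prod>i\<le>n. G i $ (\<sigma>(n := c, Suc n := a)) i $ (if i = 0 then b else (\<sigma>(n := c)) (i - 1)))
        = (\<Prod>i\<le>n. G i $ (\<sigma>(n := c)) i $ (if i = 0 then b else \<sigma> (i - 1)))"
      by (intro prod.cong) auto
    then show ?thesis by (simp add: atMost_Suc)
  qed
  have "mat_chain G (Suc (Suc n)) $ a $ b = (\<Sum>c\<in>UNIV. G (Suc n) $ a $ c * mat_chain G (Suc n) $ c $ b)"
    by (simp add: matrix_matrix_mult_def)
  also have "\<dots> = (\<Sum>c\<in>UNIV. \<Sum>\<sigma>\<in>{..<n} \<rightarrow>\<^sub>E UNIV. G (Suc n) $ a $ c *
      (\<Prod>i\<le>n. G i $ (\<sigma>(n := c)) i $ (if i = 0 then b else \<sigma> (i - 1))))"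
    by (simp only: Suc.IH sum_distrib_left)
  also have "\<dots> = (\<Sum>\<sigma>\<in>{..<Suc n} \<rightarrow>\<^sub>E UNIV.
      \<Prod>i\<le>Suc n. G i $ (\<sigma>(Suc n := a)) i $ (if i = 0 then b else \<sigma> (i - 1)))"
    by (simp only: lessThan_Suc sum_PiE_insert lessThan_iff less_irrefl not_False_eq_True last_factor)
  finally show ?case .
qed

lemma prevpos_eq:
  assumes "i < N"
  shows "prevpos N i = (if i = 0 then N - 1 else i - 1)"
proof (cases "i = 0")
  case False
  then have "(i + N - 1) mod N = (i - 1) mod N"
    by (metis Nat.add_diff_assoc2 One_nat_def Suc_leI mod_add_self2 neq0_conv)
  with assms False show ?thesis by (simp add: prevpos_def)
qed (use assms in \<open>simp add: prevpos_def\<close>)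

lemma trace_mat_chain_eq_cyclic_sum:
  assumes "0 < N"
  shows "trace (mat_chain G N) = (\<Sum>\<sigma>\<in>{..<N} \<rightarrow>\<^sub>E UNIV. \<Prod>i<N. G i $ \<sigma> i $ \<sigma> (prevpos N i))"
proof -
  obtain n where N: "N = Suc n" using assms gr0_implies_Suc by blast
  have cyc: "(\<Prod>i<N. G i $ (\<sigma>(n := a)) i $ (\<sigma>(n := a)) (prevpos N i))
      = (\<Prod>i\<le>n. G i $ (\<sigma>(n := a)) i $ (if i = 0 then a else \<sigma> (i - 1)))" for \<sigma> a
    unfolding N lessThan_Suc_atMost by (intro prod.cong) (auto simp: prevpos_eq)
  have "trace (mat_chain G N) = (\<Sum>a\<in>UNIV. mat_chain G (Suc n) $ a $ a)"
    by (simp add: trace_def N)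
  also have "\<dots> = (\<Sum>\<sigma>\<in>{..<N} \<rightarrow>\<^sub>E UNIV. \<Prod>i<N. G i $ \<sigma> i $ \<sigma> (prevpos N i))"
    unfolding mat_chain_Suc_entry cyc[symmetric]
    by (simp add: N lessThan_Suc sum_PiE_insert)
  finally show ?thesis .
qed

text \<open>The weight of a vertex with vertical edges \<open>X\<close> below and \<open>Z\<close> above and horizontal edges
  \<open>E = e\<^sub>i\<close> to its right and \<open>P = e\<^sub>i\<^sub>-\<^sub>1\<close> to its left, set to \<open>0\<close> on inadmissible configurations.\<close>

definition vertex_wt :: "real \<Rightarrow> real \<Rightarrow> bool \<Rightarrow> bool \<Rightarrow> bool \<Rightarrow> bool \<Rightarrow> real" where
  "vertex_wt eps r X Z E P =
     (if ofb X + ofb E = ofb Z + ofb P \<and> ofb X + ofb E \<le> 1 then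
        if \<not> X \<and> \<not> E \<and> \<not> Z \<and> \<not> P then eps * (1 - r\<^sup>2)
        else if (X \<and> P) \<or> (E \<and> Z) then r else 1
      else 0)"

lemma prod_vertex_wt:
  "(\<Prod>i<N. vertex_wt eps (r i) (i \<in> x) (i \<in> z) (i \<in> e) (prevpos N i \<in> e))
     = (if admissible N x z e then \<Prod>i<N. wt eps (r i) N x z e i else 0)"
proof (cases "admissible N x z e")
  case True
  then show ?thesis
    by (auto simp: admissible_def vertex_wt_def wt_def intro!: prod.cong)
next
  case False
  then obtain i where "i < N" "vertex_wt eps (r i) (i \<in> x) (i \<in> z) (i \<in> e) (prevpos N i \<in> e) = 0"
    by (auto simp: admissible_def vertex_wt_def)
  with False show ?thesis by (auto intro: prod_zero)
qed

lemma Tmat_eq_sum_Pow: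
  "Tmat alpha eps N b x z
     = (\<Sum>e\<in>Pow {0..<N}. \<Prod>i<N. vertex_wt eps (alpha (int i) * b) (i \<in> x) (i \<in> z) (i \<in> e) (prevpos N i \<in> e))"
proof -
  have "{e. e \<subseteq> {0..<N} \<and> admissible N x z e} = {e \<in> Pow {0..<N}. admissible N x z e}"
    by auto
  then show ?thesis
    unfolding Tmat_def prod_vertex_wt by (simp only: sum.inter_filter finite_Pow_iff finite_atLeastLessThan)
qed

text \<open>The two vertices at one position of the rows with vertex parameters \<open>r\<close> (below) and \<open>s\<close>
  (above), with the vertical edge between them summed out. The state is the pair of horizontal
  edges of the two rows.\<close>

definition column_mat :: "real \<Rightarrow> real \<Rightarrow> real \<Rightarrow> bool \<Rightarrow> bool \<Rightarrow> real^(bool \<times> bool)^(bool \<times> bool)" where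
  "column_mat eps r s X Z =
     (\<chi> c d. \<Sum>y\<in>UNIV. vertex_wt eps r X y (fst c) (fst d) * vertex_wt eps s y Z (snd c) (snd d))"

lemma matmul_Tmat_eq_trace:
  assumes "0 < N"
  shows "matmul N (Tmat alpha eps N b) (Tmat alpha eps N b') x z
     = trace (mat_chain (\<lambda>i. column_mat eps (alpha (int i) * b) (alpha (int i) * b') (i \<in> x) (i \<in> z)) N)"
    (is "_ = trace (mat_chain ?K N)")
proof -
  define A where "A i Y e = vertex_wt eps (alpha (int i) * b) (i \<in> x) Y (i \<in> e) (prevpos N i \<in> e)" for i Y e
  define B where "B i Y f = vertex_wt eps (alpha (int i) * b') Y (i \<in> z) (i \<in> f) (prevpos N i \<in> f)" for i Y f
  have col: "(\<Sum>Y\<in>UNIV. A i Y e * B i Y f)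
      = ?K i $ restrict (\<lambda>i. (i \<in> e, i \<in> f)) {..<N} i $ restrict (\<lambda>i. (i \<in> e, i \<in> f)) {..<N} (prevpos N i)"
    if "i < N" for i e f
    using that assms by (simp add: A_def B_def column_mat_def prevpos_def)
  have factor: "(\<Sum>y\<in>Pow {..<N}. \<Prod>i<N. A i (i \<in> y) e * B i (i \<in> y) f)
      = (\<Prod>i<N. \<Sum>Y\<in>UNIV. A i Y e * B i Y f)" for e f
    using sum_Pow_prod_mem[of "{..<N}" "\<lambda>i Y. A i Y e * B i Y f"] by (simp add: UNIV_bool add.commute)
  have "matmul N (Tmat alpha eps N b) (Tmat alpha eps N b') x z
      = (\<Sum>y\<in>Pow {..<N}. (\<Sum>e\<in>Pow {..<N}. \<Prod>i<N. A i (i \<in> y) e) * (\<Sum>f\<in>Pow {..<N}. \<Prod>i<N. B i (i \<in> y) f))"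
    unfolding matmul_def Tmat_eq_sum_Pow A_def B_def atLeast0LessThan ..
  also have "\<dots> = (\<Sum>y\<in>Pow {..<N}. \<Sum>e\<in>Pow {..<N}. \<Sum>f\<in>Pow {..<N}. \<Prod>i<N. A i (i \<in> y) e * B i (i \<in> y) f)"
    by (simp only: sum_product prod.distrib)
  also have "\<dots> = (\<Sum>e\<in>Pow {..<N}. \<Sum>f\<in>Pow {..<N}. \<Sum>y\<in>Pow {..<N}. \<Prod>i<N. A i (i \<in> y) e * B i (i \<in> y) f)"
    by (subst sum.swap) (rule sum.cong[OF refl], rule sum.swap)
  also have "\<dots> = (\<Sum>e\<in>Pow {..<N}. \<Sum>f\<in>Pow {..<N}. \<Prod>i<N. \<Sum>Y\<in>UNIV. A i Y e * B i Y f)"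
    by (simp only: factor)
  also have "\<dots> = (\<Sum>\<sigma>\<in>{..<N} \<rightarrow>\<^sub>E UNIV. \<Prod>i<N. ?K i $ \<sigma> i $ \<sigma> (prevpos N i))"
    unfolding sum_Pow_pair_eq_sum_PiE[symmetric] by (intro sum.cong prod.cong refl) (simp add: col)
  also have "\<dots> = trace (mat_chain ?K N)"
    by (rule trace_mat_chain_eq_cyclic_sum[OF assms, symmetric])
  finally show ?thesis .
qed

lemma UNIV_bool_pair: "(UNIV :: (bool \<times> bool) set) = {(False, False), (False, True), (True, False), (True, True)}"
  by (auto simp: UNIV_bool)

definition R_mat :: "real \<Rightarrow> real \<Rightarrow> real^(bool \<times> bool)^(bool \<times> bool)" where
  "R_mat q c = (\<chi> a b. if a = b then (if fst a = snd a then q else 1)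
                        else if a = (False, True) \<and> b = (True, False) then c else 0)"

lemma invertible_R_mat:
  assumes "q \<noteq> 0"
  shows "invertible (R_mat q c)"
  unfolding invertible_def
proof (intro exI conjI)
  show "R_mat q c ** R_mat (1 / q) (- c) = mat 1" "R_mat (1 / q) (- c) ** R_mat q c = mat 1"
    using assms by (auto simp: vec_eq_iff matrix_matrix_mult_def mat_def R_mat_def UNIV_bool_pair)
qed

text \<open>The RLL relation of the five-vertex model, checked entry by entry. The R-matrix depends on
  \<open>b\<close> and \<open>b'\<close> only through \<open>b / b'\<close>, hence not on the position.\<close>

lemma R_mat_column_mat_intertwine:
  fixes eps a b b' :: real
  assumes "b \<noteq> 0" "b' \<noteq> 0"
  defines "R \<equiv> R_mat (b / b') (eps * (b / b' - b' / b))"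
  shows "R ** column_mat eps (a * b) (a * b') X Z = column_mat eps (a * b') (a * b) X Z ** R"
proof -
  have "(R ** column_mat eps (a * b) (a * b') X Z) $ c $ d = (column_mat eps (a * b') (a * b) X Z ** R) $ c $ d"
    for c d
    using assms(1,2)
    by (cases c; cases d; cases X; cases Z)
       (simp_all add: R_def R_mat_def column_mat_def vertex_wt_def ofb_def matrix_matrix_mult_def
          UNIV_bool_pair UNIV_bool, simp_all add: field_simps power2_eq_square)
  then show ?thesis by (simp add: vec_eq_iff)
qed

theorem lemma3p1:
  fixes m1 N :: nat and alpha :: "int \<Rightarrow> real" and beta beta' eps :: real
  assumes "m1 \<ge> 1"
    and "\<And>i. alpha i > 0"
    and "\<And>i. alpha (i + int m1) = alpha i"
    and "N > 0" and "m1 dvd N"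
    and "beta > 0" and "beta' > 0"
    and "(eps = 1 \<and> (\<forall>i. alpha i * beta < 1 \<and> alpha i * beta' < 1))
       \<or> (eps = -1 \<and> (\<forall>i. alpha i * beta > 1 \<and> alpha i * beta' > 1))"
    and "x \<subseteq> {0..<N}" and "z \<subseteq> {0..<N}"
  shows "matmul N (Tmat alpha eps N beta) (Tmat alpha eps N beta') x z
       = matmul N (Tmat alpha eps N beta') (Tmat alpha eps N beta) x z"
proof -
  define L where "L b b' = (\<lambda>i. column_mat eps (alpha (int i) * b) (alpha (int i) * b') (i \<in> x) (i \<in> z))"
    for b b' 
  define R where "R = R_mat (beta / beta') (eps * (beta / beta' - beta' / beta))"
  have "invertible R"
    using assms(6,7) by (simp add: R_def invertible_R_mat)
  moreover have "R ** L beta beta' i = L beta' beta i ** R" for i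
    using assms(6,7) by (simp add: R_def L_def R_mat_column_mat_intertwine)
  ultimately have "trace (mat_chain (L beta beta') N) = trace (mat_chain (L beta' beta) N)"
    by (rule trace_mat_chain_intertwine)
  then show ?thesis
    using assms(4) by (simp add: matmul_Tmat_eq_trace L_def)
qed

end
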